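(* Consider the OMADRE setting with $K=L_{d,n}$, $\mathcal S$ the dyadic rectangles, $F_S$ the constant functions on $S$, and the online averaging rule. Let $y=\theta^*+\sigma\epsilon$ as in the model below. There is an absolute constant $C>1$ such that for every $\mathsf T\subset K$, every partition $P\in\mathcal P_{\mathsf T}$ and every $\theta\in\Theta_P$, $$\overline{\mathcal R}(\theta,P)\le C|P|\big(\|\theta^*_{\mathsf T}\|_\infty^2+\sigma^2\log(eN)\big)\log(eN).$$
   Context: Model: $y=\theta^*+\sigma\epsilon\in\mathbb R^K$ with $\theta^*\in\mathbb R^K$, $\sigma>0$, and $(\epsilon_s)$ independent, mean zero, with $\max(\mathbb P[\epsilon_s\ge x],\mathbb P[\epsilon_s\le -x])\le 2e^{-x^2/2}$ for $x\ge0$. $L_{d,n}=[n]^d$, $n=2^k$, $N=n^d$. A dyadic interval is $((a-1)2^s,a2^s]\cap\mathbb Z$ with integers $0\le s\le k$, $1\le a\le 2^{k-s}$; a dyadic rectangle is a product of $d$ dyadic intervals; $\mathcal S$ is the set of all dyadic rectangles. Online averaging rule: $r^{(S)}_{U,s}(y_U)=\bar y_U$ (mean of $y_u$, $u\in U$), $\bar y_\emptyset=0$. For an ordering $\rho:[N]\to K$ (with $\rho[a:b]=\{\rho(a),\dots,\rho(b)\}$), expert $S$ predicts $\hat y^{(S)}_{\rho(t)}=r^{(S)}_{\rho[1:t-1]\cap S,\rho(t)}(y_{\rho[1:t-1]\cap S})$ for $\rho(t)\in S$. $\mathcal P_{\mathsf T}$ is the set of partitions of $\mathsf T$ into dyadic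 rectangles; for $P\in\mathcal P_{\mathsf T}$, $\Theta_P=\{\theta\in\mathbb R^{\mathsf T}:\theta\text{ constant on each }S\in P\}$. $\mathcal R(y,\theta,P)=\sup_\rho\sum_{S\in P}\big(\sum_{t:\rho(t)\in S}(y_{\rho(t)}-\hat y^{(S)}_{\rho(t)})^2-\|y_S-\theta_S\|^2\big)$ (supremum over all orderings of $K$), and $\overline{\mathcal R}(\theta,P)=\mathbb E\,\mathcal R(y,\theta,P)$. *)

theory Defs
  imports "HOL-Probability.Probability"
begin

definition lattice :: "nat \<Rightarrow> nat \<Rightarrow> nat list set" where
  "lattice d n = {x. length x = d \<and> (\<forall>i<d. 1 \<le> x!i \<and> x!i \<le> n)}"

definition dyadic_interval :: "nat \<Rightarrow> nat set \<Rightarrow> bool" where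
  "dyadic_interval k I \<longleftrightarrow>
     (\<exists>s a. s \<le> k \<and> 1 \<le> a \<and> a \<le> 2^(k-s) \<and> I = {(a-1)*2^s <.. a*2^s})"

definition dyadic_rect :: "nat \<Rightarrow> nat \<Rightarrow> nat list set \<Rightarrow> bool" where
  "dyadic_rect d k S \<longleftrightarrow>
     (\<exists>I. (\<forall>i<d. dyadic_interval k (I i)) \<and> S = {x. length x = d \<and> (\<forall>i<d. x!i \<in> I i)})"

definition dyadic_partitions :: "nat \<Rightarrow> nat \<Rightarrow> nat list set \<Rightarrow> nat list set set set" where
  "dyadic_partitions d k T =
     {P. (\<forall>S\<in>P. dyadic_rect d k S) \<and> (\<forall>S\<in>P. \<forall>S'\<in>P. S \<noteq> S' \<longrightarrow> S \<inter> S' = {}) \<and> \<Union>P = T}"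

definition piecewise_const :: "nat list set set \<Rightarrow> (nat list \<Rightarrow> real) \<Rightarrow> bool" where
  "piecewise_const P \<theta> \<longleftrightarrow> (\<forall>S\<in>P. \<forall>u\<in>S. \<forall>v\<in>S. \<theta> u = \<theta> v)"

definition avg :: "(nat list \<Rightarrow> real) \<Rightarrow> nat list set \<Rightarrow> real" where
  "avg y U = (if U = {} then 0 else (\<Sum>u\<in>U. y u) / real (card U))"

text \<open>Orderings rho of K, represented as lists enumerating K without repetition
  (rho(t+1) = rho!t, rho[1:t] = set (take t rho)).\<close>
definition orderings :: "nat list set \<Rightarrow> nat list list set" where
  "orderings K = {xs. distinct xs \<and> set xs = K}"

definition expert_loss :: "(nat list \<Rightarrow> real) \<Rightarrow> nat list list \<Rightarrow> nat list set \<Rightarrow> real" where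
  "expert_loss y \<rho> S =
     (\<Sum>t<length \<rho>. if \<rho>!t \<in> S then (y (\<rho>!t) - avg y (set (take t \<rho>) \<inter> S))^2 else 0)"

text \<open>R(y,theta,P): supremum (a maximum, finitely many orderings) over orderings of K.\<close>
definition regret :: "nat list set \<Rightarrow> (nat list \<Rightarrow> real) \<Rightarrow> (nat list \<Rightarrow> real) \<Rightarrow> nat list set set \<Rightarrow> real" where
  "regret K y \<theta> P =
     Max ((\<lambda>\<rho>. \<Sum>S\<in>P. (expert_loss y \<rho> S - (\<Sum>u\<in>S. (y u - \<theta> u)^2))) ` orderings K)"

definition sup_norm_on :: "nat list set \<Rightarrow> (nat list \<Rightarrow> real) \<Rightarrow> real" where
  "sup_norm_on T f = (if T = {} then 0 else Max ((\<lambda>u. \<bar>f u\<bar>) ` T))"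

definition subgaussian_noise :: "'a measure \<Rightarrow> ('i \<Rightarrow> 'a \<Rightarrow> real) \<Rightarrow> 'i set \<Rightarrow> bool" where
  "subgaussian_noise M \<epsilon> K \<longleftrightarrow> prob_space M \<and> prob_space.indep_vars M (\<lambda>_. borel) \<epsilon> K \<and>
     (\<forall>s\<in>K. integrable M (\<epsilon> s) \<and> (\<integral>\<omega>. \<epsilon> s \<omega> \<partial>M) = 0 \<and>
        (\<forall>x\<ge>0. measure M {\<omega>\<in>space M. \<epsilon> s \<omega> \<ge> x} \<le> 2 * exp (- (x^2) / 2) \<and>
                measure M {\<omega>\<in>space M. \<epsilon> s \<omega> \<le> - x} \<le> 2 * exp (- (x^2) / 2)))"

end

theory Submission
  imports Defs "HOL-Analysis.Harmonic_Numbers"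
begin

text \<open>
  On a cell S on which |y| \<le> M, the online averaging expert loses, along any ordering, at most
  the in-sample sum of squared deviations of y over S plus 4 M^2 H_|S|: by Welford's update the
  t-th prediction error e enters the sum of squared deviations with weight t/(t+1), and the
  remainder e^2/(t+1) is at most 4 M^2/(t+1). The sum of squared deviations is the loss of the
  best constant, so for every ordering the regret is at most 4 |P| M^2 (1 + ln N).

  For y = theta* + sigma eps one may take M^2 \<le> 2 |theta*_T|_inf^2 + 2 sigma^2 Z with
  Z = 4 ln (sum_u exp(eps_u^2/4)) \<ge> max_u eps_u^2. The sub-Gaussian tails bound E exp(eps_u^2/4)
  by an absolute constant c, and concavity of ln gives E Z \<le> 4 ln (c N).
\<close>

section \<open>Online averaging against the best constant\<close>

lemma harm_le_one_plus_ln: "harm n \<le> 1 + ln (real n)"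
proof (cases "n = 0")
  case False
  then show ?thesis
    using euler_mascheroni_sequence_decreasing[of 1 n] by (simp add: harm_expand)
qed (simp add: harm_expand)

text \<open>This equals the sum of (y u - avg y A)^2; the closed form is the one on which Welford's
  update acts.\<close>
definition sum_sq_dev :: "('a \<Rightarrow> real) \<Rightarrow> 'a set \<Rightarrow> real" where
  "sum_sq_dev y A = (\<Sum>u\<in>A. (y u)^2) - (\<Sum>u\<in>A. y u)^2 / real (card A)"

lemma sum_sq_dev_insert:
  assumes "finite A" "x \<notin> A"
  shows "sum_sq_dev y (insert x A) = sum_sq_dev y A + (y x - avg y A)^2 * real (card A) / (real (card A) + 1)"
proof (cases "A = {}")
  case True
  then show ?thesis by (simp add: sum_sq_dev_def avg_def)
next
  case False
  define n where "n = real (card A)"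
  define s where "s = (\<Sum>u\<in>A. y u)"
  have n: "n > 0" using False assms by (simp add: n_def card_gt_0_iff)
  have "sum_sq_dev y (insert x A) = (\<Sum>u\<in>A. (y u)^2) + (y x)^2 - (s + y x)^2 / (n + 1)"
    using assms by (simp add: sum_sq_dev_def n_def s_def add.commute)
  also have "\<dots> = (\<Sum>u\<in>A. (y u)^2) - s^2 / n + (y x - s / n)^2 * n / (n + 1)"
    using n by (simp add: divide_simps power2_eq_square) algebra
  finally show ?thesis
    using False by (simp add: sum_sq_dev_def avg_def n_def s_def)
qed

lemma sum_sq_dev_le_sum_sq:
  assumes "finite S"
  shows "sum_sq_dev y S \<le> (\<Sum>u\<in>S. (y u - c)^2)"
proof (cases "S = {}")
  case True
  then show ?thesis by (simp add: sum_sq_dev_def)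
next
  case False
  define n where "n = real (card S)"
  define s where "s = (\<Sum>u\<in>S. y u)"
  have n: "n > 0" using False assms by (simp add: n_def card_gt_0_iff)
  have "(\<Sum>u\<in>S. (y u - c)^2) = (\<Sum>u\<in>S. (y u)^2) - 2 * c * s + n * c^2"
    by (simp add: power2_diff sum.distrib sum_subtractf sum_distrib_left sum_distrib_right s_def n_def mult_ac)
  moreover have "0 \<le> n * c^2 - 2 * c * s + s^2 / n"
  proof -
    have "(n * c - s)^2 / n = n * c^2 - 2 * c * s + s^2 / n"
      using n by (simp add: field_simps power2_eq_square)
    then show ?thesis using n by (metis zero_le_divide_iff zero_le_power2 less_imp_le)
  qed
  ultimately show ?thesis by (simp add: sum_sq_dev_def s_def n_def)
qed

lemma abs_avg_le:
  assumes "\<forall>u\<in>A. \<bar>y u\<bar> \<le> M" "A \<noteq> {}"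
  shows "\<bar>avg y A\<bar> \<le> M"
proof (cases "finite A")
  case True
  have "\<bar>\<Sum>u\<in>A. y u\<bar> \<le> real (card A) * M"
    using order_trans[OF sum_abs sum_mono[of A "\<lambda>u. \<bar>y u\<bar>" "\<lambda>_. M"]] assms(1) by simp
  moreover have "real (card A) > 0" using True assms(2) by (simp add: card_gt_0_iff)
  ultimately show ?thesis using assms(2) by (simp add: avg_def field_simps)
next
  case False
  then show ?thesis using assms by (auto simp: avg_def)
qed

lemma expert_loss_snoc:
  "expert_loss y (xs @ [x]) S =
     expert_loss y xs S + (if x \<in> S then (y x - avg y (set xs \<inter> S))^2 else 0)"
proof -
  have "(\<Sum>t<length xs. if (xs @ [x]) ! t \<in> S
            then (y ((xs @ [x]) ! t) - avg y (set (take t (xs @ [x])) \<inter> S))^2 else 0)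
      = expert_loss y xs S"
    unfolding expert_loss_def by (rule sum.cong) (auto simp: nth_append)
  then show ?thesis by (simp add: expert_loss_def)
qed

lemma expert_loss_le_sum_sq_dev:
  assumes "distinct \<rho>" "\<forall>u\<in>S. \<bar>y u\<bar> \<le> M"
  shows "expert_loss y \<rho> S \<le> sum_sq_dev y (set \<rho> \<inter> S) + 4 * M^2 * harm (card (set \<rho> \<inter> S))"
  using assms(1)
proof (induction \<rho> rule: rev_induct)
  case Nil
  then show ?case by (simp add: expert_loss_def sum_sq_dev_def harm_expand)
next
  case (snoc x xs)
  then have IH: "expert_loss y xs S \<le> sum_sq_dev y (set xs \<inter> S) + 4 * M^2 * harm (card (set xs \<inter> S))"
    and x: "x \<notin> set xs" by auto
  show ?case
  proof (cases "x \<in> S")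
    case False
    then show ?thesis using IH by (simp add: expert_loss_snoc)
  next
    case True
    define A where "A = set xs \<inter> S"
    define n where "n = real (card A)"
    have A: "finite A" "x \<notin> A" "set (xs @ [x]) \<inter> S = insert x A"
      using x True by (auto simp: A_def)
    have err_abs: "\<bar>y x - avg y A\<bar> \<le> 2 * M"
    proof (cases "A = {}")
      case True
      then show ?thesis using assms(2) \<open>x \<in> S\<close> by (force simp: avg_def)
    next
      case False
      then have "\<bar>avg y A\<bar> \<le> M" using assms(2) by (intro abs_avg_le) (auto simp: A_def)
      then show ?thesis using assms(2) \<open>x \<in> S\<close> by force
    qed
    define e where "e = (y x - avg y A)^2"
    have err: "e \<le> 4 * M^2"
      using power_mono[OF err_abs, of 2] by (simp add: e_def power_mult_distrib)
    have n: "n + 1 > 0" by (simp add: n_def)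
    have loss: "expert_loss y (xs @ [x]) S = expert_loss y xs S + e"
      using True by (simp add: expert_loss_snoc A_def e_def)
    have "e * n / (n + 1) + e / (n + 1) = e * (n + 1) / (n + 1)"
      by (simp add: add_divide_distrib[symmetric] distrib_left)
    then have split: "e = e * n / (n + 1) + e / (n + 1)"
      using n by simp
    have "e / (n + 1) \<le> 4 * M^2 / (n + 1)"
      using err n by (simp add: divide_right_mono)
    moreover have "sum_sq_dev y (insert x A) = sum_sq_dev y A + e * n / (n + 1)"
      using sum_sq_dev_insert[OF A(1,2), of y] by (simp add: e_def n_def)
    moreover have "4 * M^2 * harm (card (insert x A)) = 4 * M^2 * harm (card A) + 4 * M^2 / (n + 1)"
      using A by (simp add: harm_Suc n_def field_simps)
    ultimately show ?thesis
      using IH loss split unfolding A(3) A_def by linarith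
  qed
qed

lemma expert_loss_nonneg: "0 \<le> expert_loss y \<rho> S"
  unfolding expert_loss_def by (intro sum_nonneg) simp

lemma finite_orderings: "finite K \<Longrightarrow> finite (orderings K)"
  by (rule finite_subset[of _ "{xs. set xs \<subseteq> K \<and> length xs = card K}"])
    (auto simp: orderings_def distinct_card[symmetric] intro: finite_lists_length_eq)

lemma orderings_nonempty: "finite K \<Longrightarrow> orderings K \<noteq> {}"
  using finite_distinct_list by (auto simp: orderings_def)

lemma regret_le:
  assumes "finite K" "\<forall>S\<in>P. S \<subseteq> K" "piecewise_const P \<theta>" "\<forall>S\<in>P. \<forall>u\<in>S. \<bar>y u\<bar> \<le> M"
  shows "regret K y \<theta> P \<le> 4 * real (card P) * M^2 * harm (card K)"
proof -
  have "(\<Sum>S\<in>P. expert_loss y \<rho> S - (\<Sum>u\<in>S. (y u - \<theta> u)^2)) \<le> 4 * real (card P) * M^2 * harm (card K)"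
    if \<rho>: "\<rho> \<in> orderings K" for \<rho>
  proof -
    have "(\<Sum>S\<in>P. expert_loss y \<rho> S - (\<Sum>u\<in>S. (y u - \<theta> u)^2)) \<le> (\<Sum>S\<in>P. 4 * M^2 * harm (card K))"
    proof (rule sum_mono)
      fix S assume S: "S \<in> P"
      then have SK: "S \<subseteq> K" and fS: "finite S" and \<rho>S: "set \<rho> \<inter> S = S"
        using assms(1,2) \<rho> by (auto simp: orderings_def finite_subset)
      obtain c where "\<forall>u\<in>S. \<theta> u = c"
        using assms(3) S unfolding piecewise_const_def by (metis ex_in_conv)
      then have "sum_sq_dev y S \<le> (\<Sum>u\<in>S. (y u - \<theta> u)^2)"
        using sum_sq_dev_le_sum_sq[OF fS, of y c] by simp
      moreover have "expert_loss y \<rho> S \<le> sum_sq_dev y S + 4 * M^2 * harm (card S)"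
        using expert_loss_le_sum_sq_dev[of \<rho> S y M] \<rho> \<rho>S assms(4) S by (simp add: orderings_def)
      moreover have "harm (card S) \<le> (harm (card K) :: real)"
        by (intro harm_mono card_mono assms(1) SK)
      ultimately show "expert_loss y \<rho> S - (\<Sum>u\<in>S. (y u - \<theta> u)^2) \<le> 4 * M^2 * harm (card K)"
        using mult_left_mono[of "harm (card S)" "harm (card K)" "4 * M^2"] by simp
    qed
    then show ?thesis by simp
  qed
  then show ?thesis
    using finite_orderings[OF assms(1)] orderings_nonempty[OF assms(1)] by (simp add: regret_def)
qed

lemma regret_ge:
  assumes "finite K"
  shows "- (\<Sum>S\<in>P. \<Sum>u\<in>S. (y u - \<theta> u)^2) \<le> regret K y \<theta> P"
proof -
  obtain \<rho> where \<rho>: "\<rho> \<in> orderings K" using orderings_nonempty[OF assms] by auto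
  have "- (\<Sum>S\<in>P. \<Sum>u\<in>S. (y u - \<theta> u)^2) \<le> (\<Sum>S\<in>P. expert_loss y \<rho> S - (\<Sum>u\<in>S. (y u - \<theta> u)^2))"
  proof -
    have "(\<Sum>S\<in>P. - (\<Sum>u\<in>S. (y u - \<theta> u)^2))
        \<le> (\<Sum>S\<in>P. expert_loss y \<rho> S - (\<Sum>u\<in>S. (y u - \<theta> u)^2))"
      by (intro sum_mono) (simp add: expert_loss_nonneg)
    then show ?thesis by (simp only: sum_negf)
  qed
  also have "\<dots> \<le> regret K y \<theta> P"
    unfolding regret_def using finite_orderings[OF assms] \<rho> by (intro Max_ge) auto
  finally show ?thesis .
qed

lemma abs_regret_le:
  assumes "finite K" "\<forall>S\<in>P. S \<subseteq> K" "piecewise_const P \<theta>" "\<forall>S\<in>P. \<forall>u\<in>S. \<bar>y u\<bar> \<le> m"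
  shows "\<bar>regret K y \<theta> P\<bar> \<le> 4 * real (card P) * m^2 * harm (card K) + (\<Sum>S\<in>P. \<Sum>u\<in>S. 2 * m^2 + 2 * (\<theta> u)^2)"
proof -
  have "(y u - \<theta> u)^2 \<le> 2 * m^2 + 2 * (\<theta> u)^2" if "S \<in> P" "u \<in> S" for S u
  proof -
    have "(y u)^2 \<le> m^2" using assms(4) that by (metis abs_le_square_iff abs_of_nonneg abs_ge_zero order_trans)
    then show ?thesis using zero_le_power2[of "y u + \<theta> u"] by (simp add: power2_eq_square algebra_simps)
  qed
  then have "(\<Sum>S\<in>P. \<Sum>u\<in>S. (y u - \<theta> u)^2) \<le> (\<Sum>S\<in>P. \<Sum>u\<in>S. 2 * m^2 + 2 * (\<theta> u)^2)"
    by (intro sum_mono) auto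
  moreover have "0 \<le> 4 * real (card P) * m^2 * harm (card K)" by (simp add: harm_nonneg)
  moreover have "0 \<le> (\<Sum>S\<in>P. \<Sum>u\<in>S. 2 * m^2 + 2 * (\<theta> u)^2)" by (intro sum_nonneg) auto
  ultimately show ?thesis
    using regret_le[OF assms] regret_ge[OF assms(1), where P=P and y=y and \<theta>=\<theta>] by linarith
qed

section \<open>Maxima of sub-Gaussian squares\<close>

text \<open>The sum of the geometric series bounding the layers
  exp((j+1)/4) P(X^2 \<ge> j) \<le> exp((j+1)/4) 4 exp(-j/2) of exp(X^2/4).\<close>
definition exp_sq_moment_bound :: real where
  "exp_sq_moment_bound = 4 * exp (1/4) / (1 - exp (- 1/4))"

lemma exp_sq_moment_bound_ge_one: "1 \<le> exp_sq_moment_bound"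
proof -
  have "0 < 1 - exp (- 1/4 :: real)" by simp
  moreover have "1 - exp (- 1/4 :: real) \<le> 4 * exp (1/4)"
    using exp_ge_zero[of "- 1/4 :: real"] one_le_exp_iff[of "1/4 :: real"] by linarith
  ultimately show ?thesis by (simp add: exp_sq_moment_bound_def)
qed

lemma sums_exp_sq_moment_bound:
  "(\<lambda>j. exp ((real j + 1) / 4) * (4 * exp (- real j / 2))) sums exp_sq_moment_bound"
proof -
  have "(\<lambda>j. exp ((real j + 1) / 4) * (4 * exp (- real j / 2))) = (\<lambda>j. 4 * exp (1/4) * exp (- 1/4) ^ j)"
    by (simp add: exp_of_nat_mult[symmetric] exp_add[symmetric] field_simps) (simp add: diff_divide_distrib)
  moreover have "(\<lambda>j. 4 * exp (1/4) * exp (- 1/4 :: real) ^ j) sums exp_sq_moment_bound"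
    unfolding exp_sq_moment_bound_def
    using sums_mult[OF geometric_sums[of "exp (- 1/4 :: real)"], of "4 * exp (1/4)"] by simp
  ultimately show ?thesis by simp
qed

definition log_sum_exp_sq :: "'i set \<Rightarrow> ('i \<Rightarrow> 'a \<Rightarrow> real) \<Rightarrow> 'a \<Rightarrow> real" where
  "log_sum_exp_sq I X \<omega> = 4 * ln (\<Sum>i\<in>I. exp ((X i \<omega>)^2 / 4))"

lemma sq_le_log_sum_exp_sq:
  assumes "finite I" "i \<in> I"
  shows "(X i \<omega>)^2 \<le> log_sum_exp_sq I X \<omega>"
proof -
  have "exp ((X i \<omega>)^2 / 4) \<le> (\<Sum>j\<in>I. exp ((X j \<omega>)^2 / 4))"
    using assms by (intro member_le_sum) auto
  moreover have "0 < (\<Sum>j\<in>I. exp ((X j \<omega>)^2 / 4))"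
    using assms by (intro sum_pos) auto
  ultimately show ?thesis
    by (simp add: log_sum_exp_sq_def ln_ge_iff[symmetric])
qed

lemma log_sum_exp_sq_nonneg:
  assumes "finite I"
  shows "0 \<le> log_sum_exp_sq I X \<omega>"
proof (cases "I = {}")
  case False
  then obtain i where "i \<in> I" by blast
  then show ?thesis by (rule order_trans[OF zero_le_power2 sq_le_log_sum_exp_sq[OF assms]])
qed (simp add: log_sum_exp_sq_def)

context prob_space
begin

lemma prob_sq_ge_le:
  assumes [measurable]: "X \<in> borel_measurable M"
    and tails: "\<forall>x\<ge>0. prob {\<omega>\<in>space M. X \<omega> \<ge> x} \<le> 2 * exp (- (x^2) / 2) \<and>
                prob {\<omega>\<in>space M. X \<omega> \<le> - x} \<le> 2 * exp (- (x^2) / 2)"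
    and "c \<ge> 0"
  shows "prob {\<omega>\<in>space M. c \<le> (X \<omega>)^2} \<le> 4 * exp (- c / 2)"
proof -
  have "c \<le> x^2 \<longleftrightarrow> sqrt c \<le> \<bar>x\<bar>" for x
    by (metis real_sqrt_abs real_sqrt_le_iff)
  then have "{\<omega>\<in>space M. c \<le> (X \<omega>)^2} = {\<omega>\<in>space M. X \<omega> \<ge> sqrt c} \<union> {\<omega>\<in>space M. X \<omega> \<le> - sqrt c}"
    by (auto simp: abs_if)
  also have "prob \<dots> \<le> prob {\<omega>\<in>space M. X \<omega> \<ge> sqrt c} + prob {\<omega>\<in>space M. X \<omega> \<le> - sqrt c}"
    by (intro measure_Un_le) measurable
  also have "\<dots> \<le> 4 * exp (- c / 2)"
    using tails[rule_format, of "sqrt c"] \<open>c \<ge> 0\<close> by simp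
  finally show ?thesis .
qed

lemma exp_sq_moment_le:
  assumes [measurable]: "X \<in> borel_measurable M"
    and tails: "\<forall>x\<ge>0. prob {\<omega>\<in>space M. X \<omega> \<ge> x} \<le> 2 * exp (- (x^2) / 2) \<and>
                prob {\<omega>\<in>space M. X \<omega> \<le> - x} \<le> 2 * exp (- (x^2) / 2)"
  shows "integrable M (\<lambda>\<omega>. exp ((X \<omega>)^2 / 4))"
    and "(\<integral>\<omega>. exp ((X \<omega>)^2 / 4) \<partial>M) \<le> exp_sq_moment_bound"
proof -
  define A where "A j = {\<omega>\<in>space M. real j \<le> (X \<omega>)^2}" for j :: nat
  define g where "g j = exp ((real j + 1) / 4)" for j :: nat
  have A [measurable]: "A j \<in> sets M" for j
    unfolding A_def by measurable
  have layer: "ennreal (exp ((X \<omega>)^2 / 4)) \<le> (\<Sum>j. ennreal (g j) * indicator (A j) \<omega>)"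
    if "\<omega> \<in> space M" for \<omega>
  proof -
    define j where "j = nat \<lfloor>(X \<omega>)^2\<rfloor>"
    have "real j \<le> (X \<omega>)^2" "(X \<omega>)^2 < real j + 1"
      by (simp_all add: j_def)
    then have "ennreal (exp ((X \<omega>)^2 / 4)) \<le> ennreal (g j) * indicator (A j) \<omega>"
      using that by (simp add: g_def A_def ennreal_leI)
    also have "\<dots> = (\<Sum>i\<in>{j}. ennreal (g i) * indicator (A i) \<omega>)"
      by (subst sum.insert) auto
    also have "\<dots> \<le> (\<Sum>i. ennreal (g i) * indicator (A i) \<omega>)"
      by (rule sum_le_suminf) auto
    finally show ?thesis .
  qed
  have "(\<integral>\<^sup>+\<omega>. exp ((X \<omega>)^2 / 4) \<partial>M) \<le> (\<integral>\<^sup>+\<omega>. (\<Sum>j. ennreal (g j) * indicator (A j) \<omega>) \<partial>M)"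
    using layer by (intro nn_integral_mono) auto
  also have "\<dots> = (\<Sum>j. ennreal (g j) * emeasure M (A j))"
    by (simp add: nn_integral_suminf nn_integral_cmult_indicator)
  also have "\<dots> \<le> (\<Sum>j. ennreal (g j * (4 * exp (- real j / 2))))"
  proof (intro suminf_le)
    fix j
    have "g j * prob (A j) \<le> g j * (4 * exp (- real j / 2))"
      using prob_sq_ge_le[OF assms, of "real j"] by (intro mult_left_mono) (simp_all add: g_def A_def)
    then show "ennreal (g j) * emeasure M (A j) \<le> ennreal (g j * (4 * exp (- real j / 2)))"
      by (simp add: emeasure_eq_measure g_def ennreal_mult[symmetric] ennreal_leI)
  qed auto
  also have "\<dots> = ennreal exp_sq_moment_bound"
    using sums_exp_sq_moment_bound unfolding g_def
    by (subst suminf_ennreal2) (auto simp: sums_iff)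
  finally have nn: "(\<integral>\<^sup>+\<omega>. exp ((X \<omega>)^2 / 4) \<partial>M) \<le> ennreal exp_sq_moment_bound" .
  then show int: "integrable M (\<lambda>\<omega>. exp ((X \<omega>)^2 / 4))"
    by (intro integrableI_nonneg) (auto simp: top_unique less_top[symmetric])
  show "(\<integral>\<omega>. exp ((X \<omega>)^2 / 4) \<partial>M) \<le> exp_sq_moment_bound"
    using nn nn_integral_eq_integral[OF int] exp_sq_moment_bound_ge_one by (simp add: ennreal_le_iff)
qed

lemma log_sum_exp_sq_expectation_le:
  assumes "finite I" "I \<noteq> {}" "c > 0"
    and moments: "\<forall>i\<in>I. integrable M (\<lambda>\<omega>. exp ((X i \<omega>)^2 / 4)) \<and>
                         expectation (\<lambda>\<omega>. exp ((X i \<omega>)^2 / 4)) \<le> c"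
  shows "integrable M (log_sum_exp_sq I X)"
    and "expectation (log_sum_exp_sq I X) \<le> 4 * ln (c * card I)"
proof -
  define W where "W \<omega> = (\<Sum>i\<in>I. exp ((X i \<omega>)^2 / 4))" for \<omega>
  define b where "b = c * card I"
  define F where "F \<omega> = 4 * (ln b - 1) + 4 * W \<omega> / b" for \<omega>
  have b: "b > 0" using assms by (simp add: b_def card_gt_0_iff)
  have W: "W \<omega> > 0" for \<omega> unfolding W_def using assms by (intro sum_pos) auto
  have W_int: "integrable M W" unfolding W_def using moments by auto
  have "expectation W \<le> (\<Sum>i\<in>I. c)"
    unfolding W_def using moments
    by (subst Bochner_Integration.integral_sum) (auto intro!: sum_mono simp del: sum_constant)
  then have EW: "expectation W \<le> b" by (simp add: b_def mult.commute)
  \<comment> \<open>the tangent line of the concave ln at b\<close>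
  have ZF: "log_sum_exp_sq I X \<omega> \<le> F \<omega>" for \<omega>
    using ln_le_minus_one[of "W \<omega> / b"] W[of \<omega>] b
    by (simp add: log_sum_exp_sq_def F_def W_def ln_div)
  have "log_sum_exp_sq I X \<in> borel_measurable M"
    using borel_measurable_integrable[OF W_int] unfolding log_sum_exp_sq_def[abs_def] W_def[symmetric]
    by measurable
  moreover have F_int: "integrable M F" unfolding F_def using W_int by auto
  ultimately show int: "integrable M (log_sum_exp_sq I X)"
    using ZF log_sum_exp_sq_nonneg[OF assms(1), of X] by (intro Bochner_Integration.integrable_bound[OF F_int])
      (auto intro!: AE_I2 intro: order_trans[OF _ abs_ge_self])
  have "expectation (log_sum_exp_sq I X) \<le> expectation F"
    using ZF by (intro integral_mono[OF int F_int])
  also have "\<dots> = 4 * (ln b - 1) + 4 * expectation W / b"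
    unfolding F_def using W_int by (simp add: prob_space)
  also have "\<dots> \<le> 4 * ln b"
    using EW b by (simp add: divide_le_eq)
  finally show "expectation (log_sum_exp_sq I X) \<le> 4 * ln (c * card I)" by (simp add: b_def)
qed

end

section \<open>Expected regret\<close>

lemma borel_measurable_regret:
  assumes "finite K" "\<forall>S\<in>P. S \<subseteq> K" "\<And>u. u \<in> K \<Longrightarrow> (\<lambda>\<omega>. y \<omega> u) \<in> borel_measurable M"
  shows "(\<lambda>\<omega>. regret K (y \<omega>) \<theta> P) \<in> borel_measurable M"
proof -
  have avg: "(\<lambda>\<omega>. avg (y \<omega>) U) \<in> borel_measurable M" if "U \<subseteq> K" for U
  proof (cases "U = {}")
    case False
    have "(\<lambda>\<omega>. \<Sum>u\<in>U. y \<omega> u) \<in> borel_measurable M"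
      using that assms(3) by (intro borel_measurable_sum) auto
    then show ?thesis using False by (simp add: avg_def)
  qed (simp add: avg_def)
  have loss: "(\<lambda>\<omega>. expert_loss (y \<omega>) \<rho> S) \<in> borel_measurable M" if "\<rho> \<in> orderings K" for \<rho> S
  proof -
    have "(\<lambda>\<omega>. if \<rho> ! t \<in> S then (y \<omega> (\<rho> ! t) - avg (y \<omega>) (set (take t \<rho>) \<inter> S))^2 else 0)
        \<in> borel_measurable M" if "t < length \<rho>" for t
    proof -
      have "\<rho> ! t \<in> K" "set (take t \<rho>) \<inter> S \<subseteq> K"
        using \<open>\<rho> \<in> orderings K\<close> that by (auto simp: orderings_def dest: in_set_takeD)
      then show ?thesis using assms(3) avg by (cases "\<rho> ! t \<in> S") auto
    qed
    then show ?thesis unfolding expert_loss_def by (intro borel_measurable_sum) auto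
  qed
  have sq: "(\<lambda>\<omega>. \<Sum>u\<in>S. (y \<omega> u - \<theta> u)^2) \<in> borel_measurable M" if "S \<in> P" for S
  proof (rule borel_measurable_sum)
    fix u assume "u \<in> S"
    then have [measurable]: "(\<lambda>\<omega>. y \<omega> u) \<in> borel_measurable M" using that assms(2,3) by blast
    show "(\<lambda>\<omega>. (y \<omega> u - \<theta> u)^2) \<in> borel_measurable M" by measurable
  qed
  show ?thesis
    unfolding regret_def
    by (rule borel_measurable_Max[OF finite_orderings[OF assms(1)]], rule borel_measurable_sum,
        rule borel_measurable_diff) (simp_all add: loss sq)
qed

lemma regret_le_log_sum_exp_sq:
  fixes \<epsilon> :: "nat list \<Rightarrow> 'a \<Rightarrow> real" and \<omega> :: 'a
  assumes "finite K" "T \<subseteq> K" "\<forall>S\<in>P. S \<subseteq> T" "piecewise_const P \<theta>" "0 \<le> \<sigma>" "\<forall>u\<in>T. \<bar>\<theta>s u\<bar> \<le> s"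
  defines "Z \<equiv> log_sum_exp_sq K \<epsilon> \<omega>"
  shows "regret K (\<lambda>u. \<theta>s u + \<sigma> * \<epsilon> u \<omega>) \<theta> P
           \<le> 8 * real (card P) * harm (card K) * (s^2 + \<sigma>^2 * Z)"
    and "\<bar>regret K (\<lambda>u. \<theta>s u + \<sigma> * \<epsilon> u \<omega>) \<theta> P\<bar>
           \<le> 8 * real (card P) * harm (card K) * (s^2 + \<sigma>^2 * Z)
              + (\<Sum>S\<in>P. \<Sum>u\<in>S. 4 * (s^2 + \<sigma>^2 * Z) + 2 * (\<theta> u)^2)"
proof -
  define m where "m = s + \<sigma> * sqrt Z"
  have PK: "\<forall>S\<in>P. S \<subseteq> K" using assms(2,3) by blast
  have y: "\<forall>S\<in>P. \<forall>u\<in>S. \<bar>\<theta>s u + \<sigma> * \<epsilon> u \<omega>\<bar> \<le> m"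
  proof (intro ballI)
    fix S u assume "S \<in> P" "u \<in> S"
    then have "u \<in> T" "u \<in> K" using assms(2,3) by auto
    then have "\<bar>\<epsilon> u \<omega>\<bar> \<le> sqrt Z"
      using sq_le_log_sum_exp_sq[OF assms(1), of u \<epsilon> \<omega>] real_sqrt_le_mono
      unfolding Z_def by fastforce
    then have "\<sigma> * \<bar>\<epsilon> u \<omega>\<bar> \<le> \<sigma> * sqrt Z" using assms(5) by (rule mult_left_mono)
    then show "\<bar>\<theta>s u + \<sigma> * \<epsilon> u \<omega>\<bar> \<le> m"
      using assms(5,6) \<open>u \<in> T\<close> abs_triangle_ineq[of "\<theta>s u" "\<sigma> * \<epsilon> u \<omega>"]
      by (auto simp: m_def abs_mult)
  qed
  have Z: "0 \<le> Z"
    unfolding Z_def by (rule log_sum_exp_sq_nonneg[OF assms(1)])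
  have m: "m^2 \<le> 2 * (s^2 + \<sigma>^2 * Z)"
    using zero_le_power2[of "s - \<sigma> * sqrt Z"] Z
    by (simp add: m_def power2_eq_square algebra_simps)
  have "4 * real (card P) * m^2 * harm (card K) \<le> 4 * real (card P) * (2 * (s^2 + \<sigma>^2 * Z)) * harm (card K)"
    using m by (intro mult_right_mono mult_left_mono) (simp_all add: harm_nonneg)
  also have "\<dots> = 8 * real (card P) * harm (card K) * (s^2 + \<sigma>^2 * Z)"
    by simp
  finally have "4 * real (card P) * m^2 * harm (card K) \<le> 8 * real (card P) * harm (card K) * (s^2 + \<sigma>^2 * Z)" .
  moreover have "(\<Sum>S\<in>P. \<Sum>u\<in>S. 2 * m^2 + 2 * (\<theta> u)^2) \<le> (\<Sum>S\<in>P. \<Sum>u\<in>S. 4 * (s^2 + \<sigma>^2 * Z) + 2 * (\<theta> u)^2)"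
    using m by (intro sum_mono) simp
  ultimately show "regret K (\<lambda>u. \<theta>s u + \<sigma> * \<epsilon> u \<omega>) \<theta> P \<le> 8 * real (card P) * harm (card K) * (s^2 + \<sigma>^2 * Z)"
    and "\<bar>regret K (\<lambda>u. \<theta>s u + \<sigma> * \<epsilon> u \<omega>) \<theta> P\<bar>
           \<le> 8 * real (card P) * harm (card K) * (s^2 + \<sigma>^2 * Z)
              + (\<Sum>S\<in>P. \<Sum>u\<in>S. 4 * (s^2 + \<sigma>^2 * Z) + 2 * (\<theta> u)^2)"
    using regret_le[OF assms(1) PK assms(4) y] abs_regret_le[OF assms(1) PK assms(4) y] by linarith+
qed

lemma (in prob_space) expected_regret_le:
  fixes \<epsilon> :: "nat list \<Rightarrow> 'a \<Rightarrow> real"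
  assumes K: "finite K" "K \<noteq> {}" and TK: "T \<subseteq> K" and PT: "\<forall>S\<in>P. S \<subseteq> T"
    and pc: "piecewise_const P \<theta>" and \<sigma>: "0 \<le> \<sigma>" and s: "\<forall>u\<in>T. \<bar>\<theta>s u\<bar> \<le> s"
    and meas: "\<forall>u\<in>K. \<epsilon> u \<in> borel_measurable M"
    and moments: "\<forall>u\<in>K. integrable M (\<lambda>\<omega>. exp ((\<epsilon> u \<omega>)^2 / 4)) \<and>
                         expectation (\<lambda>\<omega>. exp ((\<epsilon> u \<omega>)^2 / 4)) \<le> c"
    and c: "1 \<le> c"
  defines "L \<equiv> 1 + ln (real (card K))"
  shows "integrable M (\<lambda>\<omega>. regret K (\<lambda>u. \<theta>s u + \<sigma> * \<epsilon> u \<omega>) \<theta> P)"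
    and "expectation (\<lambda>\<omega>. regret K (\<lambda>u. \<theta>s u + \<sigma> * \<epsilon> u \<omega>) \<theta> P)
           \<le> 32 * (1 + ln c) * real (card P) * (s^2 + \<sigma>^2 * L) * L"
proof -
  let ?R = "\<lambda>\<omega>. regret K (\<lambda>u. \<theta>s u + \<sigma> * \<epsilon> u \<omega>) \<theta> P"
  define Z where "Z = log_sum_exp_sq K \<epsilon>"
  define H where "H = (harm (card K) :: real)"
  define U where "U \<omega> = 8 * real (card P) * H * (s^2 + \<sigma>^2 * Z \<omega>)" for \<omega>
  define V where "V \<omega> = (\<Sum>S\<in>P. \<Sum>u\<in>S. 4 * (s^2 + \<sigma>^2 * Z \<omega>) + 2 * (\<theta> u)^2)" for \<omega>
  note bounds = regret_le_log_sum_exp_sq[OF K(1) TK PT pc \<sigma> s, of \<epsilon>, folded Z_def H_def]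
  have Z0: "0 \<le> Z \<omega>" for \<omega> unfolding Z_def by (rule log_sum_exp_sq_nonneg[OF K(1)])
  have Z_int: "integrable M Z" and EZ: "expectation Z \<le> 4 * ln (c * card K)"
    using log_sum_exp_sq_expectation_le[OF K, of c \<epsilon>] moments c by (auto simp: Z_def)
  have lnc: "0 \<le> ln c" and lnK: "0 \<le> ln (real (card K))"
    using c K by (simp_all add: Suc_leI card_gt_0_iff)
  have U_int: "integrable M U" unfolding U_def using Z_int by auto
  have UV_int: "integrable M (\<lambda>\<omega>. U \<omega> + V \<omega>)" unfolding U_def V_def using Z_int by auto
  have "?R \<in> borel_measurable M"
    using meas PT TK by (intro borel_measurable_regret[OF K(1)]) auto
  moreover have "\<bar>?R \<omega>\<bar> \<le> \<bar>U \<omega> + V \<omega>\<bar>" for \<omega>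
    using bounds(2)[of \<omega>] by (simp add: U_def V_def)
  ultimately show R_int: "integrable M ?R"
    by (intro Bochner_Integration.integrable_bound[OF UV_int]) (auto intro!: AE_I2)
  have "expectation ?R \<le> expectation U"
    using bounds(1) by (intro integral_mono[OF R_int U_int]) (simp add: U_def)
  also have "\<dots> = 8 * real (card P) * H * (s^2 + \<sigma>^2 * expectation Z)"
    unfolding U_def using Z_int by (simp add: prob_space.prob_space[OF prob_space_axioms])
  also have "\<dots> \<le> 8 * real (card P) * L * (4 * (1 + ln c) * (s^2 + \<sigma>^2 * L))"
  proof (intro mult_mono mult_left_mono)
    have "expectation Z \<le> 4 * (ln c + ln (real (card K)))"
      using EZ c K ln_mult[of c "real (card K)"] by (simp add: card_gt_0_iff)
    also have "\<dots> \<le> 4 * (1 + ln c) * L"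
      using mult_nonneg_nonneg[OF lnc lnK] by (simp add: L_def algebra_simps)
    finally have "expectation Z \<le> 4 * (1 + ln c) * L" .
    then have "\<sigma>^2 * expectation Z \<le> \<sigma>^2 * (4 * (1 + ln c) * L)"
      by (rule mult_left_mono) simp
    moreover have "s^2 \<le> 4 * (1 + ln c) * s^2"
      using lnc by (simp add: algebra_simps)
    ultimately show "s^2 + \<sigma>^2 * expectation Z \<le> 4 * (1 + ln c) * (s^2 + \<sigma>^2 * L)"
      by (simp add: distrib_left mult_ac)
    show "H \<le> L" unfolding H_def L_def by (rule harm_le_one_plus_ln)
  qed (use Z0 lnK in \<open>auto simp: H_def harm_nonneg L_def intro!: integral_nonneg_AE\<close>)
  also have "\<dots> = 32 * (1 + ln c) * real (card P) * (s^2 + \<sigma>^2 * L) * L"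
    by (simp add: algebra_simps)
  finally show "expectation ?R \<le> 32 * (1 + ln c) * real (card P) * (s^2 + \<sigma>^2 * L) * L" .
qed

lemma finite_lattice: "finite (lattice d n)"
  by (rule finite_subset[of _ "{xs. set xs \<subseteq> {1..n} \<and> length xs = d}"])
    (auto simp: lattice_def in_set_conv_nth intro: finite_lists_length_eq)

lemma card_lattice_le: "card (lattice d n) \<le> n ^ d"
proof -
  have "card (lattice d n) \<le> card {xs. set xs \<subseteq> {1..n} \<and> length xs = d}"
    by (rule card_mono) (auto simp: lattice_def in_set_conv_nth intro: finite_lists_length_eq)
  then show ?thesis by (simp add: card_lists_length_eq)
qed

lemma lattice_nonempty: "1 \<le> n \<Longrightarrow> lattice d n \<noteq> {}"
  using lattice_def[of d n] by (auto intro!: exI[of _ "replicate d 1"])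

lemma abs_le_sup_norm_on: "finite T \<Longrightarrow> u \<in> T \<Longrightarrow> \<bar>f u\<bar> \<le> sup_norm_on T f"
  by (auto simp: sup_norm_on_def)

lemma subgaussian_noise_exp_sq_moment:
  assumes "subgaussian_noise M \<epsilon> K" "u \<in> K"
  shows "\<epsilon> u \<in> borel_measurable M"
    and "integrable M (\<lambda>\<omega>. exp ((\<epsilon> u \<omega>)^2 / 4))"
    and "(\<integral>\<omega>. exp ((\<epsilon> u \<omega>)^2 / 4) \<partial>M) \<le> exp_sq_moment_bound"
proof -
  interpret prob_space M using assms(1) by (simp add: subgaussian_noise_def)
  show meas: "\<epsilon> u \<in> borel_measurable M"
    using assms by (auto simp: subgaussian_noise_def)
  show "integrable M (\<lambda>\<omega>. exp ((\<epsilon> u \<omega>)^2 / 4))"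
    and "(\<integral>\<omega>. exp ((\<epsilon> u \<omega>)^2 / 4) \<partial>M) \<le> exp_sq_moment_bound"
    using exp_sq_moment_le[OF meas] assms by (auto simp: subgaussian_noise_def)
qed

lemma expected_regret_lattice_le:
  assumes "0 < \<sigma>" "subgaussian_noise M \<epsilon> (lattice d (2^k))" "T \<subseteq> lattice d (2^k)"
    "P \<in> dyadic_partitions d k T" "piecewise_const P \<theta>"
  defines "K \<equiv> lattice d (2^k)" and "L \<equiv> ln (exp 1 * real ((2^k)^d :: nat))"
    and "C \<equiv> 32 * (1 + ln exp_sq_moment_bound)"
  shows "integrable M (\<lambda>\<omega>. regret K (\<lambda>u. \<theta>s u + \<sigma> * \<epsilon> u \<omega>) \<theta> P)"
    and "(\<integral>\<omega>. regret K (\<lambda>u. \<theta>s u + \<sigma> * \<epsilon> u \<omega>) \<theta> P \<partial>M)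
           \<le> C * real (card P) * ((sup_norm_on T \<theta>s)^2 + \<sigma>^2 * L) * L"
proof -
  define s where "s = sup_norm_on T \<theta>s"
  define L\<^sub>K where "L\<^sub>K = 1 + ln (real (card K))"
  interpret prob_space M using assms(2) by (simp add: subgaussian_noise_def)
  have K: "finite K" "K \<noteq> {}" "card K \<le> (2^k)^d"
    unfolding K_def by (simp_all add: finite_lattice lattice_nonempty card_lattice_le)
  have "\<forall>S\<in>P. S \<subseteq> T" "\<forall>u\<in>T. \<bar>\<theta>s u\<bar> \<le> s"
    using assms finite_subset[OF _ K(1)] by (auto simp: dyadic_partitions_def s_def K_def abs_le_sup_norm_on)
  moreover note subgaussian_noise_exp_sq_moment[of M \<epsilon> K]
  ultimately have R: "integrable M (\<lambda>\<omega>. regret K (\<lambda>u. \<theta>s u + \<sigma> * \<epsilon> u \<omega>) \<theta> P)"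
    "expectation (\<lambda>\<omega>. regret K (\<lambda>u. \<theta>s u + \<sigma> * \<epsilon> u \<omega>) \<theta> P)
           \<le> C * real (card P) * ((s^2 + \<sigma>^2 * L\<^sub>K) * L\<^sub>K)"
    using expected_regret_le[OF K(1,2), of T P \<theta> \<sigma> \<theta>s s \<epsilon> exp_sq_moment_bound] assms exp_sq_moment_bound_ge_one
    by (auto simp: K_def C_def L\<^sub>K_def mult.assoc)
  then show "integrable M (\<lambda>\<omega>. regret K (\<lambda>u. \<theta>s u + \<sigma> * \<epsilon> u \<omega>) \<theta> P)"
    by blast
  have "C * real (card P) * ((s^2 + \<sigma>^2 * L\<^sub>K) * L\<^sub>K) \<le> C * real (card P) * ((s^2 + \<sigma>^2 * L) * L)"
    using K of_nat_mono[OF K(3)] exp_sq_moment_bound_ge_one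
    by (intro mult_mono add_left_mono mult_left_mono) (simp_all add: C_def L\<^sub>K_def L_def ln_mult Suc_leI card_gt_0_iff)
  from order_trans[OF R(2) this] show "expectation (\<lambda>\<omega>. regret K (\<lambda>u. \<theta>s u + \<sigma> * \<epsilon> u \<omega>) \<theta> P)
           \<le> C * real (card P) * ((sup_norm_on T \<theta>s)^2 + \<sigma>^2 * L) * L"
    by (simp add: s_def mult.assoc)
qed

theorem mainTheorem5:
  shows "\<exists>C>1. \<forall>(d::nat) (k::nat) (\<sigma>::real) (\<theta>s::nat list \<Rightarrow> real)
      (M::(nat list \<Rightarrow> real) measure) (\<epsilon>::nat list \<Rightarrow> (nat list \<Rightarrow> real) \<Rightarrow> real)
      (T::nat list set) (P::nat list set set) (\<theta>::nat list \<Rightarrow> real).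
    \<sigma> > 0 \<and> subgaussian_noise M \<epsilon> (lattice d (2^k)) \<and> T \<subseteq> lattice d (2^k) \<and>
    P \<in> dyadic_partitions d k T \<and> piecewise_const P \<theta> \<longrightarrow>
    (let K = lattice d (2^k); N = real ((2^k)^d); Y = (\<lambda>\<omega> u. \<theta>s u + \<sigma> * \<epsilon> u \<omega>) in
       integrable M (\<lambda>\<omega>. regret K (Y \<omega>) \<theta> P) \<and>
       (\<integral>\<omega>. regret K (Y \<omega>) \<theta> P \<partial>M)
         \<le> C * real (card P) * ((sup_norm_on T \<theta>s)^2 + \<sigma>^2 * ln (exp 1 * N)) * ln (exp 1 * N))"
proof -
  have "1 < 32 * (1 + ln exp_sq_moment_bound)"
    using exp_sq_moment_bound_ge_one by (simp add: add_pos_nonneg)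
  then show ?thesis
    using expected_regret_lattice_le by (intro exI[of _ "32 * (1 + ln exp_sq_moment_bound)"]) (auto simp: Let_def)
qed

end
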